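(* Let $c\in[\frac12,1)$ and let $d,\delta$ be positive integers with $d\ge\delta$. Let $G$ be a graph with maximum degree $\delta$ and $w:V(G)\to[0,1]$ a weight function with $w(V(G))=1$, and assume $G$ has no $d$-bounded $(w,c)$-balanced separator. Fix a bijection $\mathcal{O}:V(G)\to\{1,\dots,|V(G)|\}$. Let $x,y\in V(G)$ be non-adjacent and incomparable with respect to $\le_A$. Then $S_x$ and $S_y$ are loosely non-crossing, i.e. $A_x\cap C_y=\emptyset$ and $A_y\cap C_x=\emptyset$.
   Context: For $X\subseteq V(G)$, $w(X)=\sum_{x\in X}w(x)$; $N[v]=N(v)\cup\{v\}$; $N^d[v]$ is the set of vertices at distance at most $d$ from $v$. A set $X$ is $d$-bounded if $X\subseteq N^d[v]$ for some $v$. $X$ is a $(w,c)$-balanced separator if every connected component $D$ of $G\setminus X$ has $w(D)\le c$. For $v\in V(G)$, the canonical star separation $S_v=(A_v,C_v,B_v)$ is: $B_v$ the (under these assumptions unique) largest-weight connected component of $G\setminus N[v]$, $C_v$ the set consisting of $v$ and every vertex of $N(v)$ with a neighbor in $B_v$, and $A_v=V(G)\setminus(B_v\cup C_v)$. Two vertices $u,v$ are star twins if $B_u=B_v$, $C_u\setminus\{u\}=C_v\setminus\{v\}$ and $A_u\setminus\{v\}=A_v\setminus\{u\}$. The relation $\le_A$ is defined by: $x\le_A y$ if $x=y$, or $x,y$ are star twins and $\mathcal{O}(x)<\mathcal{O}(y)$, or $x,y$ are not star twins and $y\in A_x$. *)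

theory Defs
  imports Complex_Main
begin

definition graph :: "'a set \<Rightarrow> ('a \<Rightarrow> 'a \<Rightarrow> bool) \<Rightarrow> bool" where
  "graph V E \<longleftrightarrow> finite V \<and> (\<forall>u v. E u v \<longrightarrow> u \<in> V \<and> v \<in> V)
     \<and> (\<forall>u v. E u v \<longrightarrow> E v u) \<and> (\<forall>v. \<not> E v v)"

definition nbhd :: "'a set \<Rightarrow> ('a \<Rightarrow> 'a \<Rightarrow> bool) \<Rightarrow> 'a \<Rightarrow> 'a set" where
  "nbhd V E v = {u \<in> V. E v u}"

definition cnbhd :: "'a set \<Rightarrow> ('a \<Rightarrow> 'a \<Rightarrow> bool) \<Rightarrow> 'a \<Rightarrow> 'a set" where
  "cnbhd V E v = insert v (nbhd V E v)"

definition max_degree :: "'a set \<Rightarrow> ('a \<Rightarrow> 'a \<Rightarrow> bool) \<Rightarrow> nat" where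
  "max_degree V E = Max ((\<lambda>v. card (nbhd V E v)) ` V)"

definition weight :: "('a \<Rightarrow> real) \<Rightarrow> 'a set \<Rightarrow> real" where
  "weight w X = (\<Sum>x\<in>X. w x)"

definition edges_in :: "'a set \<Rightarrow> ('a \<Rightarrow> 'a \<Rightarrow> bool) \<Rightarrow> ('a \<times> 'a) set" where
  "edges_in S E = {(u, v). u \<in> S \<and> v \<in> S \<and> E u v}"

definition component :: "'a set \<Rightarrow> ('a \<Rightarrow> 'a \<Rightarrow> bool) \<Rightarrow> 'a set \<Rightarrow> bool" where
  "component S E D \<longleftrightarrow> (\<exists>u\<in>S. D = {v. (u, v) \<in> (edges_in S E)\<^sup>*})"

definition ball_d :: "'a set \<Rightarrow> ('a \<Rightarrow> 'a \<Rightarrow> bool) \<Rightarrow> nat \<Rightarrow> 'a \<Rightarrow> 'a set" where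
  "ball_d V E d v = {u \<in> V. \<exists>k\<le>d. (v, u) \<in> (edges_in V E) ^^ k}"

definition d_bounded :: "'a set \<Rightarrow> ('a \<Rightarrow> 'a \<Rightarrow> bool) \<Rightarrow> nat \<Rightarrow> 'a set \<Rightarrow> bool" where
  "d_bounded V E d X \<longleftrightarrow> (\<exists>v\<in>V. X \<subseteq> ball_d V E d v)"

definition balanced_sep :: "'a set \<Rightarrow> ('a \<Rightarrow> 'a \<Rightarrow> bool) \<Rightarrow> ('a \<Rightarrow> real) \<Rightarrow> real \<Rightarrow> 'a set \<Rightarrow> bool" where
  "balanced_sep V E w c X \<longleftrightarrow> X \<subseteq> V \<and> (\<forall>D. component (V - X) E D \<longrightarrow> weight w D \<le> c)"

definition starB :: "'a set \<Rightarrow> ('a \<Rightarrow> 'a \<Rightarrow> bool) \<Rightarrow> ('a \<Rightarrow> real) \<Rightarrow> 'a \<Rightarrow> 'a set" where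
  "starB V E w v = (THE D. component (V - cnbhd V E v) E D \<and>
      (\<forall>D'. component (V - cnbhd V E v) E D' \<longrightarrow> weight w D' \<le> weight w D))"

definition starC :: "'a set \<Rightarrow> ('a \<Rightarrow> 'a \<Rightarrow> bool) \<Rightarrow> ('a \<Rightarrow> real) \<Rightarrow> 'a \<Rightarrow> 'a set" where
  "starC V E w v = insert v {u \<in> nbhd V E v. \<exists>b\<in>starB V E w v. E u b}"

definition starA :: "'a set \<Rightarrow> ('a \<Rightarrow> 'a \<Rightarrow> bool) \<Rightarrow> ('a \<Rightarrow> real) \<Rightarrow> 'a \<Rightarrow> 'a set" where
  "starA V E w v = V - (starB V E w v \<union> starC V E w v)"

definition star_twins :: "'a set \<Rightarrow> ('a \<Rightarrow> 'a \<Rightarrow> bool) \<Rightarrow> ('a \<Rightarrow> real) \<Rightarrow> 'a \<Rightarrow> 'a \<Rightarrow> bool" where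
  "star_twins V E w u v \<longleftrightarrow> starB V E w u = starB V E w v
     \<and> starC V E w u - {u} = starC V E w v - {v}
     \<and> starA V E w u - {v} = starA V E w v - {u}"

definition le_A :: "'a set \<Rightarrow> ('a \<Rightarrow> 'a \<Rightarrow> bool) \<Rightarrow> ('a \<Rightarrow> real) \<Rightarrow> ('a \<Rightarrow> nat) \<Rightarrow> 'a \<Rightarrow> 'a \<Rightarrow> bool" where
  "le_A V E w ord x y \<longleftrightarrow> x = y
     \<or> (star_twins V E w x y \<and> ord x < ord y)
     \<or> (\<not> star_twins V E w x y \<and> y \<in> starA V E w x)"

end

theory Submission
  imports Defs
begin

text \<open>The closed neighbourhood N[v] is 1-bounded, so it is not a balanced separator: some
component of G \<setminus> N[v] weighs more than c \<ge> 1/2, and such a component is necessarily B_v.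
Incomparability of x and y rules out that they are star twins, so y \<notin> A_x; being non-adjacent
to x, y lies in B_x. A vertex z \<in> A_x \<inter> C_y would be a neighbour of y outside C_x, hence
outside N[x] (a neighbour of x adjacent to y \<in> B_x belongs to C_x), hence in the component B_x
of y, a contradiction.\<close>

lemma component_subset:
  assumes "component S E D"
  shows "D \<subseteq> S"
proof
  fix v assume "v \<in> D"
  from assms obtain u where u: "u \<in> S" "D = {v. (u, v) \<in> (edges_in S E)\<^sup>*}"
    unfolding component_def by blast
  with \<open>v \<in> D\<close> have "(u, v) \<in> (edges_in S E)\<^sup>*" by blast
  then show "v \<in> S" using u(1)
    by (induction rule: rtrancl_induct) (auto simp: edges_in_def)
qed

lemma component_closed:
  assumes "component S E D" "a \<in> D" "b \<in> S" "E a b"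
  shows "b \<in> D"
proof -
  from assms(1) obtain u where u: "D = {v. (u, v) \<in> (edges_in S E)\<^sup>*}"
    unfolding component_def by blast
  have "(a, b) \<in> edges_in S E"
    using component_subset[OF assms(1)] assms(2-4) by (auto simp: edges_in_def)
  with u assms(2) show ?thesis by (auto intro: rtrancl_into_rtrancl)
qed

lemma component_eq_if_not_disjoint:
  assumes "\<forall>u v. E u v \<longrightarrow> E v u"
    and "component S E D1" "component S E D2" "D1 \<inter> D2 \<noteq> {}"
  shows "D1 = D2"
proof -
  let ?R = "(edges_in S E)\<^sup>*"
  have "sym (edges_in S E)" using assms(1) by (auto simp: sym_def edges_in_def)
  then have sym: "sym ?R" by (rule sym_rtrancl)
  from assms(2,3) obtain u1 u2 where u: "D1 = {v. (u1, v) \<in> ?R}" "D2 = {v. (u2, v) \<in> ?R}"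
    unfolding component_def by blast
  with assms(4) obtain a where "(u1, a) \<in> ?R" "(u2, a) \<in> ?R" by blast
  then have "(u1, u2) \<in> ?R" "(u2, u1) \<in> ?R"
    using sym by (meson rtrancl_trans symD)+
  then show ?thesis unfolding u by (meson rtrancl_trans)
qed

lemma d_bounded_cnbhd:
  assumes "v \<in> V" "0 < d"
  shows "d_bounded V E d (cnbhd V E v)"
proof -
  have "(v, v) \<in> edges_in V E ^^ 0" by simp
  moreover have "(v, u) \<in> edges_in V E ^^ 1" if "u \<in> nbhd V E v" for u
    using that assms(1) by (auto simp: nbhd_def edges_in_def)
  ultimately have "cnbhd V E v \<subseteq> ball_d V E d v"
    using assms unfolding cnbhd_def ball_d_def
    by (auto simp: nbhd_def simp del: relpow.simps intro: Suc_leI)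
  then show ?thesis using assms(1) unfolding d_bounded_def by blast
qed

lemma starB_eq_heavy_component:
  assumes "graph V E" and "\<forall>u\<in>V. 0 \<le> w u"
    and D: "component (V - cnbhd V E v) E D" and heavy: "weight w V < 2 * weight w D"
  shows "starB V E w v = D"
proof -
  let ?S = "V - cnbhd V E v"
  have lighter: "weight w D' < weight w D" if D': "component ?S E D'" "D' \<noteq> D" for D'
  proof -
    have sub: "D \<subseteq> V" "D' \<subseteq> V"
      using component_subset[OF D] component_subset[OF D'(1)] by auto
    moreover have "finite V" using assms(1) by (simp add: graph_def)
    ultimately have fin: "finite D" "finite D'" by (auto intro: finite_subset)
    have disj: "D \<inter> D' = {}"
      using assms(1) D D' component_eq_if_not_disjoint by (metis graph_def)
    have "weight w D + weight w D' = weight w (D \<union> D')"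
      unfolding weight_def by (rule sum.union_disjoint[OF fin disj, symmetric])
    also have "\<dots> \<le> weight w V"
      unfolding weight_def using sub assms(2) \<open>finite V\<close> by (intro sum_mono2) auto
    finally show ?thesis using heavy by linarith
  qed
  show ?thesis
    unfolding starB_def
  proof (rule the_equality)
    show "component ?S E D \<and> (\<forall>D'. component ?S E D' \<longrightarrow> weight w D' \<le> weight w D)"
      using D lighter by (metis order_refl less_imp_le)
  next
    fix D'' assume "component ?S E D'' \<and> (\<forall>D'. component ?S E D' \<longrightarrow> weight w D' \<le> weight w D'')"
    then show "D'' = D" using D lighter by force
  qed
qed

lemma component_starB:
  assumes "1/2 \<le> c" and "0 < d" and "graph V E"
    and "\<forall>u\<in>V. 0 \<le> w u" and "weight w V = 1"
    and no_sep: "\<not> (\<exists>X. d_bounded V E d X \<and> balanced_sep V E w c X)"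
    and "v \<in> V"
  shows "component (V - cnbhd V E v) E (starB V E w v)"
proof -
  have "\<not> balanced_sep V E w c (cnbhd V E v)"
    using no_sep d_bounded_cnbhd[OF \<open>v \<in> V\<close> \<open>0 < d\<close>] by blast
  moreover have "cnbhd V E v \<subseteq> V" using \<open>v \<in> V\<close> by (auto simp: cnbhd_def nbhd_def)
  ultimately obtain D where D: "component (V - cnbhd V E v) E D" "weight w D > c"
    unfolding balanced_sep_def by (auto simp: not_le)
  have "weight w V < 2 * weight w D" using D(2) assms(1,5) by linarith
  with D(1) show ?thesis using starB_eq_heavy_component[OF assms(3,4) D(1)] by simp
qed

lemma starA_disjoint_starC:
  assumes "graph V E" and "y \<in> V" and "x \<noteq> y" and "\<not> E x y"
    and "y \<notin> starA V E w x"
    and B: "component (V - cnbhd V E x) E (starB V E w x)"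
  shows "starA V E w x \<inter> starC V E w y = {}"
proof (rule ccontr)
  assume "starA V E w x \<inter> starC V E w y \<noteq> {}"
  then obtain z where zA: "z \<in> starA V E w x" and zC: "z \<in> starC V E w y" by blast
  have "y \<notin> starC V E w x" using assms(3,4) by (simp add: starC_def nbhd_def)
  then have yB: "y \<in> starB V E w x" using assms(2,5) by (simp add: starA_def)
  have zV: "z \<in> V" and zB: "z \<notin> starB V E w x" and zCx: "z \<notin> starC V E w x"
    using zA by (simp_all add: starA_def)
  have "z \<noteq> y" using zB yB by blast
  then have Eyz: "E y z" using zC by (simp add: starC_def nbhd_def)
  then have "E z y" using assms(1) by (simp add: graph_def)
  then have "\<not> E x z" using zV yB zCx by (auto simp: starC_def nbhd_def)
  moreover have "z \<noteq> x" using Eyz assms(1,4) by (auto simp: graph_def)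
  ultimately have "z \<in> V - cnbhd V E x" using zV by (simp add: cnbhd_def nbhd_def)
  then have "z \<in> starB V E w x" using component_closed[OF B yB _ Eyz] by blast
  with zB show False by blast
qed

lemma star_twins_sym:
  "star_twins V E w x y \<Longrightarrow> star_twins V E w y x"
  by (auto simp: star_twins_def)

lemma incomparable_not_in_starA:
  assumes "inj_on ord V" and "x \<in> V" and "y \<in> V"
    and "\<not> le_A V E w ord x y" and "\<not> le_A V E w ord y x"
  shows "y \<notin> starA V E w x"
proof -
  have "\<not> star_twins V E w x y"
  proof
    assume "star_twins V E w x y"
    with assms(4,5) have "ord x = ord y" "x \<noteq> y"
      by (auto simp: le_A_def dest: star_twins_sym)
    with assms(1-3) show False by (meson inj_onD)
  qed
  with assms(4) show ?thesis by (auto simp: le_A_def)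
qed

theorem lemma4p4:
  fixes V :: "'a set" and E :: "'a \<Rightarrow> 'a \<Rightarrow> bool" and w :: "'a \<Rightarrow> real"
    and ord :: "'a \<Rightarrow> nat" and c :: real and d \<delta> :: nat and x y :: 'a
  assumes "1/2 \<le> c" and "c < 1"
    and "0 < d" and "0 < \<delta>" and "\<delta> \<le> d"
    and "graph V E"
    and "max_degree V E = \<delta>"
    and "\<forall>v\<in>V. 0 \<le> w v \<and> w v \<le> 1"
    and "weight w V = 1"
    and "\<not> (\<exists>X. d_bounded V E d X \<and> balanced_sep V E w c X)"
    and "bij_betw ord V {1..card V}"
    and "x \<in> V" and "y \<in> V" and "\<not> E x y"
    and "\<not> le_A V E w ord x y" and "\<not> le_A V E w ord y x"
  shows "starA V E w x \<inter> starC V E w y = {} \<and> starA V E w y \<inter> starC V E w x = {}"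
proof -
  have "x \<noteq> y" using assms(15) by (auto simp: le_A_def)
  have "\<not> E y x" using assms(6,14) by (auto simp: graph_def)
  have inj: "inj_on ord V" using assms(11) by (rule bij_betw_imp_inj_on)
  have w_nonneg: "\<forall>v\<in>V. 0 \<le> w v" using assms(8) by blast
  have "component (V - cnbhd V E v) E (starB V E w v)" if "v \<in> V" for v
    using component_starB[OF assms(1,3,6) w_nonneg assms(9,10) that] .
  then have "component (V - cnbhd V E x) E (starB V E w x)"
    and "component (V - cnbhd V E y) E (starB V E w y)"
    using assms(12,13) by blast+
  moreover have "y \<notin> starA V E w x" "x \<notin> starA V E w y"
    using incomparable_not_in_starA[OF inj] assms(12,13,15,16) by blast+
  ultimately show ?thesis
    using starA_disjoint_starC assms(6,12-14) \<open>x \<noteq> y\<close> \<open>\<not> E y x\<close> by metis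
qed

end
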